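(* Let $\mathcal{X}$ be a finite state space and let $(Q_t)_{t\in[0,1]}$ be a family of transition-rate matrices on $\mathcal{X}$. Let $r_t(x,y)\ge 0$ and $\hat r_t(x,y)>0$ ($x\neq y$, $t\in[0,1]$) be functions such that the two families of matrices $Q^*_t(y,x):=Q_t(x,y)\,r_t(x,y)$ and $\hat Q_t(y,x):=Q_t(x,y)\,\hat r_t(x,y)$ (for $y\neq x$, with diagonals chosen so that columns sum to zero) are transition-rate matrices. Consider two CTMCs running backwards in time from $t=1$ to $t=0$: the first has, at time $t$, rate $Q^*_t(y,x)=Q_t(x,y)r_t(x,y)$ of jumping from $x$ to $y$ and initial (time-$1$) distribution $q^*_1$; the second has jump rate $\hat Q_t(y,x)=Q_t(x,y)\hat r_t(x,y)$ from $x$ to $y$ and initial distribution $\hat q_1$. Denote by $q^*_t$ and $\hat q_t$ their respective marginal distributions at time $t$. Then $$D_{KL}(q^*_0\,\|\,\hat q_0)\le \int_0^1 \mathbb{E}_{x_t\sim q^*_t}\sum_{y\neq x_t} Q_t(x_t,y)\,\ell\big(r_t(x_t,y),\hat r_t(x_t,y)\big)\,dt + D_{KL}(q^*_1\,\|\,\hat q_1).$$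
   Context: A transition-rate matrix $Q$ on a finite set $\mathcal{X}$ is a matrix indexed by $\mathcal{X}\times\mathcal{X}$ with nonnegative off-diagonal entries and with every column summing to zero; $Q(x,y)$ for $x\neq y$ is the rate of jumping from state $y$ to state $x$. Define $K(a)=a(\log a-1)$ (with $K(0)=0$) and $\ell(a,b)=b-a\log b+K(a)$ for $a\ge 0$, $b>0$. $D_{KL}$ is the Kullback–Leibler divergence. All time-dependent quantities are assumed regular enough (e.g. continuous in $t$) for the processes and integrals to be well defined. *)

theory Defs
  imports "HOL-Analysis.Analysis"
begin

definition Kfun :: "real \<Rightarrow> real" where
  "Kfun a = (if a = 0 then 0 else a * (ln a - 1))"

definition ellfun :: "real \<Rightarrow> real \<Rightarrow> real" where
  "ellfun a b = b - a * ln b + Kfun a"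

text \<open>Transition-rate matrix on a finite type: nonnegative off-diagonal entries,
  every column sums to zero. Q x y is the rate of jumping from y to x.\<close>
definition rate_matrix :: "('x::finite \<Rightarrow> 'x \<Rightarrow> real) \<Rightarrow> bool" where
  "rate_matrix Q \<longleftrightarrow> (\<forall>x y. x \<noteq> y \<longrightarrow> Q x y \<ge> 0) \<and> (\<forall>y. (\<Sum>x\<in>UNIV. Q x y) = 0)"

definition prob_vec :: "('x::finite \<Rightarrow> real) \<Rightarrow> bool" where
  "prob_vec p \<longleftrightarrow> (\<forall>x. p x \<ge> 0) \<and> (\<Sum>x\<in>UNIV. p x) = 1"

definition KL :: "('x::finite \<Rightarrow> real) \<Rightarrow> ('x \<Rightarrow> real) \<Rightarrow> ereal" where
  "KL p q = (if (\<forall>x. p x > 0 \<longrightarrow> q x > 0)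
             then ereal (\<Sum>x\<in>UNIV. if p x = 0 then 0 else p x * ln (p x / q x))
             else \<infinity>)"

text \<open>Generator built from Q and a ratio function r: G y x = Q x y * r x y for y \<noteq> x
  (rate of jumping from x to y), diagonal chosen so columns sum to zero.\<close>
definition gen :: "('x::finite \<Rightarrow> 'x \<Rightarrow> real) \<Rightarrow> ('x \<Rightarrow> 'x \<Rightarrow> real) \<Rightarrow> 'x \<Rightarrow> 'x \<Rightarrow> real" where
  "gen Q r y x = (if y = x then - (\<Sum>z\<in>UNIV - {x}. Q x z * r x z) else Q x y * r x y)"

text \<open>Marginals of a CTMC run backwards in time from t=1 to t=0 with generator G t
  (G t y x = rate of jumping from x to y at time t): Kolmogorov forward equation
  in reversed time s = 1 - t, i.e.  d/dt q_t(y) = - sum_x G_t(y,x) q_t(x).\<close>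
definition backward_marginals ::
  "(real \<Rightarrow> 'x::finite \<Rightarrow> 'x \<Rightarrow> real) \<Rightarrow> (real \<Rightarrow> 'x \<Rightarrow> real) \<Rightarrow> bool" where
  "backward_marginals G q \<longleftrightarrow>
     (\<forall>t\<in>{0..1}. \<forall>y. ((\<lambda>s. q s y) has_real_derivative
        (- (\<Sum>x\<in>UNIV. G t y x * q t x))) (at t within {0..1}))"

end

theory Submission
  imports Defs "HOL-Real_Asymp.Real_Asymp"
begin

text \<open>
  Shift both marginals away from zero: \<open>P t = qs t + \<epsilon>\<close> and
  \<open>R t = qh t + \<epsilon> exp (K (1 - t))\<close>, where \<open>K\<close> bounds the row sums of the generator of the
  second chain. Along the backward equations the shifted divergence
  \<open>F t = \<Sum>x. P t x ln (P t x / R t x)\<close> has derivative at least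
  \<open>- \<Sum>x. P t x \<Sum>y\<noteq>x. Q t x y \<ell>(r t x y, rh t x y)\<close> up to an error \<open>O(\<epsilon> ln (1/\<epsilon>))\<close>:
  after pairing the jump terms, the pair \<open>(x, y)\<close> contributes
  \<open>Q t x y P t x (r ln s - rh (s - 1))\<close>, where \<open>s\<close> is the ratio of the likelihood ratios
  \<open>P/R\<close> at \<open>y\<close> and at \<open>x\<close>, and \<open>a ln s - b (s - 1) \<le> \<ell>(a, b)\<close> since \<open>\<ell>(a, b s) \<ge> 0\<close>.
  The exponentially growing shift makes \<open>R\<close> a supersolution of the backward equation, which
  gives the remaining term a sign. Integrating over \<open>[0,1]\<close> and letting \<open>\<epsilon> \<rightarrow> 0\<close> proves the
  claim; in the extended reals the shifted divergences converge to the possibly infinite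
  divergences. The bounds \<open>0 \<le> q \<le> 1\<close> on the marginals come from conservation of mass and
  a Gronwall argument for the squared negative part.
\<close>

lemma has_real_derivative_nonneg_imp_le:
  fixes f :: "real \<Rightarrow> real"
  assumes "a \<le> b" "{a..b} \<subseteq> S"
    and deriv: "\<And>s. s \<in> {a..b} \<Longrightarrow> \<exists>y. (f has_real_derivative y) (at s within S) \<and> y \<ge> 0"
  shows "f a \<le> f b"
proof (rule DERIV_nonneg_imp_increasing_open[OF \<open>a \<le> b\<close>])
  fix s assume "a < s" "s < b"
  then have "s \<in> interior S"
    using interior_mono[OF assms(2)] by auto
  then have "at s within S = at s"
    by (rule at_within_interior)
  with \<open>a < s\<close> \<open>s < b\<close> show "\<exists>y. DERIV f s :> y \<and> y \<ge> 0"
    using deriv[of s] by auto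
next
  have "continuous (at s within {a..b}) f" if "s \<in> {a..b}" for s
    using deriv[OF that] assms(2) by (auto dest: DERIV_continuous intro: continuous_within_subset)
  then show "continuous_on {a..b} f"
    by (simp add: continuous_on_eq_continuous_within)
qed

lemma le_integral_of_has_real_derivative_ge:
  fixes F g :: "real \<Rightarrow> real"
  assumes "a \<le> b" "continuous_on {a..b} g"
    and deriv: "\<And>t. t \<in> {a..b} \<Longrightarrow>
      \<exists>D. (F has_real_derivative D) (at t within {a..b}) \<and> D \<ge> - g t - c"
  shows "F a \<le> F b + integral {a..b} g + c * (b - a)"
proof -
  define H where "H s = F s + integral {a..s} g + c * s" for s
  have "H a \<le> H b"
  proof (rule has_real_derivative_nonneg_imp_le[OF \<open>a \<le> b\<close> order_refl])
    fix t assume t: "t \<in> {a..b}"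
    then obtain D where D: "(F has_real_derivative D) (at t within {a..b})" "D \<ge> - g t - c"
      using deriv by blast
    have "(H has_real_derivative D + g t + c) (at t within {a..b})"
      unfolding H_def
      using DERIV_add[OF DERIV_add[OF D(1) integral_has_real_derivative[OF assms(2) t]]
          DERIV_cmult[OF DERIV_ident, of c]] by simp
    with D(2) show "\<exists>y. (H has_real_derivative y) (at t within {a..b}) \<and> y \<ge> 0"
      by (intro exI[of _ "D + g t + c"]) auto
  qed
  then show ?thesis
    by (simp add: H_def algebra_simps)
qed

lemma gronwall_backward_nonpos:
  fixes N N' :: "real \<Rightarrow> real"
  assumes "t \<le> b" "{t..b} \<subseteq> S"
    and deriv: "\<And>s. s \<in> {t..b} \<Longrightarrow> (N has_real_derivative N' s) (at s within S)"
    and ge: "\<And>s. s \<in> {t..b} \<Longrightarrow> N' s + C * N s \<ge> 0" and "N b \<le> 0"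
  shows "N t \<le> 0"
proof -
  have "N t * exp (C * t) \<le> N b * exp (C * b)"
  proof (rule has_real_derivative_nonneg_imp_le[OF assms(1,2)])
    fix s assume s: "s \<in> {t..b}"
    have "((\<lambda>s. exp (C * s)) has_real_derivative exp (C * s) * C) (at s within S)"
      by (auto intro!: derivative_eq_intros)
    from DERIV_mult[OF deriv[OF s] this]
    have "((\<lambda>s. N s * exp (C * s)) has_real_derivative (N' s + C * N s) * exp (C * s)) (at s within S)"
      by (rule DERIV_cong) (simp add: algebra_simps)
    moreover have "(N' s + C * N s) * exp (C * s) \<ge> 0"
      using ge[OF s] by simp
    ultimately show "\<exists>y. ((\<lambda>s. N s * exp (C * s)) has_real_derivative y) (at s within S) \<and> y \<ge> 0"
      by blast
  qed
  also have "\<dots> \<le> 0"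
    using \<open>N b \<le> 0\<close> by (simp add: mult_nonpos_nonneg)
  finally show ?thesis
    by (simp add: mult_le_0_iff)
qed

lemma continuous_on_compact_bound_finite:
  fixes f :: "'a::topological_space \<Rightarrow> 'i::finite \<Rightarrow> real"
  assumes "compact A" "\<And>i. continuous_on A (\<lambda>t. f t i)"
  shows "\<exists>B\<ge>0. \<forall>t\<in>A. \<forall>i. \<bar>f t i\<bar> \<le> B"
proof -
  have "continuous_on A (\<lambda>t. \<Sum>i\<in>UNIV. \<bar>f t i\<bar>)"
    using assms(2) by (intro continuous_intros)
  then obtain B where "B \<ge> 0" and B: "\<And>t. t \<in> A \<Longrightarrow> norm (\<Sum>i\<in>UNIV. \<bar>f t i\<bar>) \<le> B"
    using continuous_on_compact_bound[OF assms(1)] by blast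
  have "\<bar>f t i\<bar> \<le> B" if "t \<in> A" for t i
  proof -
    have "\<bar>f t i\<bar> \<le> (\<Sum>i\<in>UNIV. \<bar>f t i\<bar>)"
      by (rule member_le_sum) auto
    also have "\<dots> \<le> B"
      using B[OF that] by (simp add: abs_le_iff)
    finally show ?thesis .
  qed
  with \<open>B \<ge> 0\<close> show ?thesis
    by blast
qed

lemma continuous_on_Kfun: "continuous_on {0..} Kfun"
proof -
  have Kfun_eq: "Kfun = (\<lambda>a. a * ln a - a)"
    by (auto simp: Kfun_def fun_eq_iff algebra_simps)
  have "continuous (at a within {0..}) (\<lambda>a. a * ln a)" if "a \<ge> 0" for a :: real
  proof (cases "a = 0")
    case True
    have "at (0::real) within {0..} = at_right 0"
      by (rule at_within_nhd[of _ UNIV]) auto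
    moreover have "((\<lambda>a::real. a * ln a) \<longlongrightarrow> 0) (at_right 0)"
      by real_asymp
    ultimately show ?thesis
      using True unfolding continuous_within by simp
  next
    case False
    with that have "isCont (\<lambda>a. a * ln a) a"
      by (auto intro!: continuous_intros)
    then show ?thesis
      by (rule continuous_at_imp_continuous_within)
  qed
  then have "continuous_on {0..} (\<lambda>a::real. a * ln a)"
    by (simp add: continuous_on_eq_continuous_within)
  then show ?thesis
    unfolding Kfun_eq by (rule continuous_on_diff[OF _ continuous_on_id])
qed

lemma ellfun_nonneg:
  assumes "a \<ge> 0" "b > 0"
  shows "ellfun a b \<ge> 0"
proof (cases "a = 0")
  case True
  with assms show ?thesis by (simp add: ellfun_def Kfun_def)
next
  case False
  with assms have "a > 0" by simp
  have "a * ln (b / a) \<le> a * (b / a - 1)"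
    using \<open>a > 0\<close> assms by (intro mult_left_mono ln_le_minus_one) auto
  with \<open>a > 0\<close> assms show ?thesis
    by (simp add: ellfun_def Kfun_def ln_div algebra_simps)
qed

lemma ln_mult_sub_le_ellfun:
  assumes "a \<ge> 0" "b > 0" "s > 0"
  shows "a * ln s - b * (s - 1) \<le> ellfun a b"
  using ellfun_nonneg[of a "b * s"] assms
  by (simp add: ellfun_def ln_mult algebra_simps)

section \<open>Generators and the backward equation\<close>

lemma sum_gen_mult:
  fixes Q r :: "'x::finite \<Rightarrow> 'x \<Rightarrow> real"
  shows "(\<Sum>x\<in>UNIV. (\<Sum>y\<in>UNIV. gen Q r x y * p y) * f x)
       = (\<Sum>y\<in>UNIV. p y * (\<Sum>x\<in>UNIV - {y}. Q y x * r y x * (f x - f y)))"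
proof -
  have column: "(\<Sum>x\<in>UNIV. gen Q r x y * f x) = (\<Sum>x\<in>UNIV - {y}. Q y x * r y x * (f x - f y))"
    for y
  proof -
    have "(\<Sum>x\<in>UNIV. gen Q r x y * f x) = gen Q r y y * f y + (\<Sum>x\<in>UNIV - {y}. gen Q r x y * f x)"
      by (simp add: sum.remove)
    also have "\<dots> = (\<Sum>x\<in>UNIV - {y}. Q y x * r y x * f x) - (\<Sum>x\<in>UNIV - {y}. Q y x * r y x) * f y"
      by (simp add: gen_def)
    also have "\<dots> = (\<Sum>x\<in>UNIV - {y}. Q y x * r y x * (f x - f y))"
      by (simp add: right_diff_distrib sum_subtractf sum_distrib_right)
    finally show ?thesis .
  qed
  have "(\<Sum>x\<in>UNIV. (\<Sum>y\<in>UNIV. gen Q r x y * p y) * f x) = (\<Sum>x\<in>UNIV. \<Sum>y\<in>UNIV. p y * (gen Q r x y * f x))"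
    by (simp add: sum_distrib_left sum_distrib_right mult_ac)
  also have "\<dots> = (\<Sum>y\<in>UNIV. \<Sum>x\<in>UNIV. p y * (gen Q r x y * f x))"
    by (rule sum.swap)
  also have "\<dots> = (\<Sum>y\<in>UNIV. p y * (\<Sum>x\<in>UNIV - {y}. Q y x * r y x * (f x - f y)))"
    by (simp add: column flip: sum_distrib_left)
  finally show ?thesis .
qed

lemma continuous_on_gen:
  assumes "\<And>x y. continuous_on S (\<lambda>t. Q t x y)" "\<And>x y. continuous_on S (\<lambda>t. r t x y)"
  shows "continuous_on S (\<lambda>t. gen (Q t) (r t) x y)"
  unfolding gen_def by (cases "x = y") (auto intro!: continuous_intros assms)

lemma has_real_derivative_min_zero_square:
  "((\<lambda>v::real. (min v 0)\<^sup>2) has_real_derivative 2 * min v 0) (at v)"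
proof -
  consider "v < 0" | "v > 0" | "v = 0" by linarith
  then show ?thesis
  proof cases
    case 1
    have "((\<lambda>v::real. v\<^sup>2) has_real_derivative 2 * min v 0) (at v)"
      using 1 by (auto intro!: derivative_eq_intros)
    then show ?thesis
      by (rule has_field_derivative_transform_within_open[of _ _ _ "{..<0}"]) (use 1 in auto)
  next
    case 2
    have "((\<lambda>v::real. 0) has_real_derivative 2 * min v 0) (at v)"
      using 2 by (auto intro!: derivative_eq_intros)
    then show ?thesis
      by (rule has_field_derivative_transform_within_open[of _ _ _ "{0<..}"]) (use 2 in auto)
  next
    case 3
    have "((\<lambda>y::real. min y 0) \<longlongrightarrow> 2 * min 0 0) (at 0)"
      by (rule tendsto_eq_intros) auto
    moreover have "\<forall>\<^sub>F y in at (0::real). min y 0 = ((min y 0)\<^sup>2 - (min 0 0)\<^sup>2) / (y - 0)"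
      unfolding eventually_at_filter
      by (rule always_eventually) (auto simp: min_def power2_eq_square)
    ultimately have "((\<lambda>y. ((min y 0)\<^sup>2 - (min 0 0)\<^sup>2) / (y - 0)) \<longlongrightarrow> 2 * min 0 0) (at (0::real))"
      by (rule Lim_transform_eventually)
    then show ?thesis
      using 3 by (simp add: has_field_derivative_iff)
  qed
qed

lemma has_real_derivative_sum_min_zero_square:
  assumes "\<And>y. ((\<lambda>s. q s y) has_real_derivative q' y) (at t within S)"
  shows "((\<lambda>s. \<Sum>y\<in>Y. (min (q s y) 0)\<^sup>2) has_real_derivative (\<Sum>y\<in>Y. 2 * min (q t y) 0 * q' y))
    (at t within S)"
  by (intro DERIV_sum DERIV_chain2[OF has_real_derivative_min_zero_square] assms)

lemma neg_part_quadratic_form_le: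
  fixes G :: "'x::finite \<Rightarrow> 'x \<Rightarrow> real"
  assumes off: "\<forall>x y. x \<noteq> y \<longrightarrow> G x y \<ge> 0" and bd: "\<forall>x y. \<bar>G x y\<bar> \<le> B"
  shows "(\<Sum>y\<in>UNIV. min (q y) 0 * (\<Sum>x\<in>UNIV. G y x * q x))
       \<le> B * CARD('x) * (\<Sum>y\<in>UNIV. (min (q y) 0)\<^sup>2)"
proof -
  define m where "m y = min (q y) 0" for y
  have "B \<ge> 0"
    using bd abs_ge_zero order_trans by blast
  have entry: "m y * G y x * q x \<le> B * (m y * m x)" for x y
  proof (cases "x = y")
    case True
    have "m y * G y x * q x = G y x * (m y)\<^sup>2"
      using True by (auto simp: m_def min_def power2_eq_square)
    also have "\<dots> \<le> B * (m y * m x)"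
      using True abs_le_D1[of "G y y" B] bd by (simp add: power2_eq_square mult_right_mono)
    finally show ?thesis .
  next
    case False
    have "m y * G y x \<le> 0"
      using off False by (simp add: m_def mult_nonpos_nonneg)
    then have "m y * G y x * q x \<le> m y * G y x * m x"
      by (intro mult_left_mono_neg) (auto simp: m_def)
    also have "\<dots> \<le> B * (m y * m x)"
    proof -
      have "G y x \<le> B" "m y * m x \<ge> 0"
        using bd abs_le_D1 by (auto simp: m_def mult_nonpos_nonpos)
      then have "G y x * (m y * m x) \<le> B * (m y * m x)"
        by (rule mult_right_mono)
      then show ?thesis
        by (simp add: mult_ac)
    qed
    finally show ?thesis .
  qed
  have "(\<Sum>y\<in>UNIV. m y * (\<Sum>x\<in>UNIV. G y x * q x)) \<le> (\<Sum>y\<in>UNIV. \<Sum>x\<in>UNIV. B * (m y * m x))"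
    unfolding sum_distrib_left by (intro sum_mono entry[unfolded mult.assoc])
  also have "\<dots> = B * (\<Sum>y\<in>UNIV. m y)\<^sup>2"
    by (simp add: power2_eq_square sum_distrib_left sum_distrib_right mult_ac)
  also have "\<dots> \<le> B * CARD('x) * (\<Sum>y\<in>UNIV. (m y)\<^sup>2)"
    using sum_squared_le_sum_of_squares[of m UNIV] \<open>B \<ge> 0\<close>
    by (simp add: mult.assoc mult_left_mono mult.commute)
  finally show ?thesis
    by (simp add: m_def)
qed

lemma backward_marginals_sum_eq:
  assumes colsum: "\<forall>t\<in>{0..1}. \<forall>x. (\<Sum>y\<in>UNIV. G t y x) = 0"
    and marg: "backward_marginals G q" and "t \<in> {0..1}"
  shows "(\<Sum>x\<in>UNIV. q t x) = (\<Sum>x\<in>UNIV. q 1 x)"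
proof -
  have "((\<lambda>s. \<Sum>x\<in>UNIV. q s x) has_real_derivative 0) (at s within {0..1})" if "s \<in> {0..1}" for s
  proof -
    have "((\<lambda>s. \<Sum>x\<in>UNIV. q s x) has_real_derivative (\<Sum>y\<in>UNIV. - (\<Sum>x\<in>UNIV. G s y x * q s x)))
        (at s within {0..1})"
      using marg that unfolding backward_marginals_def by (intro DERIV_sum) blast
    moreover have "(\<Sum>y\<in>UNIV. \<Sum>x\<in>UNIV. G s y x * q s x) = (\<Sum>x\<in>UNIV. (\<Sum>y\<in>UNIV. G s y x) * q s x)"
      unfolding sum_distrib_right by (rule sum.swap)
    ultimately show ?thesis
      using colsum that by (simp add: sum_negf)
  qed
  then obtain c where "\<forall>s\<in>{0..1}. (\<Sum>x\<in>UNIV. q s x) = c"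
    using has_field_derivative_zero_constant[of "{0..1::real}"] by blast
  with \<open>t \<in> {0..1}\<close> show ?thesis
    by simp
qed

lemma backward_marginals_nonneg:
  fixes G :: "real \<Rightarrow> 'x::finite \<Rightarrow> 'x \<Rightarrow> real"
  assumes off: "\<forall>t\<in>{0..1}. \<forall>x y. x \<noteq> y \<longrightarrow> G t x y \<ge> 0"
    and bd: "\<forall>t\<in>{0..1}. \<forall>x y. \<bar>G t x y\<bar> \<le> B"
    and marg: "backward_marginals G q" and init: "\<forall>x. q 1 x \<ge> 0"
    and "t \<in> {0..1}"
  shows "q t z \<ge> 0"
proof -
  define m where "m s y = min (q s y) 0" for s y
  define N where "N s = (\<Sum>y\<in>UNIV. (m s y)\<^sup>2)" for s
  define N' where "N' s = (\<Sum>y\<in>UNIV. 2 * m s y * - (\<Sum>x\<in>UNIV. G s y x * q s x))" for s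
  have "N t \<le> 0"
  proof (rule gronwall_backward_nonpos[where N = N and t = t and b = 1 and S = "{0..1}" and N' = N' and C = "2 * B * CARD('x)"])
    fix s assume "s \<in> {t..1}"
    then have s: "s \<in> {0..1}"
      using \<open>t \<in> {0..1}\<close> by auto
    show "(N has_real_derivative N' s) (at s within {0..1})"
      unfolding N_def N'_def m_def using marg s unfolding backward_marginals_def
      by (intro has_real_derivative_sum_min_zero_square) blast
    have "N' s = - 2 * (\<Sum>y\<in>UNIV. m s y * (\<Sum>x\<in>UNIV. G s y x * q s x))"
      by (simp add: N'_def sum_distrib_left sum_negf mult_ac)
    moreover have "(\<Sum>y\<in>UNIV. m s y * (\<Sum>x\<in>UNIV. G s y x * q s x)) \<le> B * CARD('x) * N s"
      using neg_part_quadratic_form_le[of "G s" B "q s"] off bd s by (simp add: N_def m_def)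
    ultimately show "N' s + 2 * B * CARD('x) * N s \<ge> 0"
      by simp
  qed (use \<open>t \<in> {0..1}\<close> init in \<open>auto simp: N_def m_def\<close>)
  moreover have "(m t z)\<^sup>2 \<le> N t"
    unfolding N_def by (rule member_le_sum) auto
  ultimately have "(m t z)\<^sup>2 \<le> 0"
    by linarith
  then show ?thesis
    by (simp add: m_def)
qed

lemma prob_vec_le_1:
  assumes "prob_vec p"
  shows "p x \<le> 1"
proof -
  have "p x \<le> (\<Sum>y\<in>UNIV. p y)"
    using assms by (intro member_le_sum) (auto simp: prob_vec_def)
  with assms show ?thesis
    by (simp add: prob_vec_def)
qed

lemma backward_marginals_prob_vec:
  fixes G :: "real \<Rightarrow> 'x::finite \<Rightarrow> 'x \<Rightarrow> real"
  assumes rate: "\<forall>t\<in>{0..1}. rate_matrix (G t)"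
    and cont: "\<forall>x y. continuous_on {0..1} (\<lambda>t. G t x y)"
    and marg: "backward_marginals G q" and init: "prob_vec (q 1)"
    and "t \<in> {0..1}"
  shows "prob_vec (q t)"
proof -
  have G_cont: "continuous_on {0..1} (\<lambda>s. case_prod (G s) i)" for i
    using cont by (cases i) simp
  obtain B where "\<forall>s\<in>{0..1}. \<forall>i. \<bar>case_prod (G s) i\<bar> \<le> B"
    using continuous_on_compact_bound_finite[of "{0..1}" "\<lambda>s. case_prod (G s)", OF compact_Icc G_cont]
    by blast
  then have "\<forall>s\<in>{0..1}. \<forall>x y. \<bar>G s x y\<bar> \<le> B"
    by simp
  then have "q t x \<ge> 0" for x
    using backward_marginals_nonneg[OF _ _ marg] rate init \<open>t \<in> {0..1}\<close>
    unfolding rate_matrix_def prob_vec_def by blast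
  moreover have "(\<Sum>x\<in>UNIV. q t x) = 1"
    using backward_marginals_sum_eq[OF _ marg \<open>t \<in> {0..1}\<close>] rate init
    unfolding rate_matrix_def prob_vec_def by simp
  ultimately show ?thesis
    by (simp add: prob_vec_def)
qed

section \<open>Entropy production\<close>

definition jump_loss ::
    "('x::finite \<Rightarrow> 'x \<Rightarrow> real) \<Rightarrow> ('x \<Rightarrow> 'x \<Rightarrow> real) \<Rightarrow> ('x \<Rightarrow> 'x \<Rightarrow> real) \<Rightarrow> 'x \<Rightarrow> real"
  where "jump_loss Q r rh x = (\<Sum>y\<in>UNIV - {x}. Q x y * ellfun (r x y) (rh x y))"

lemma continuous_on_jump_loss:
  assumes "\<And>x y. continuous_on S (\<lambda>t. Q t x y)" "\<And>x y. continuous_on S (\<lambda>t. r t x y)"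
    and "\<And>x y. continuous_on S (\<lambda>t. rh t x y)"
    and "\<forall>t\<in>S. \<forall>x y. x \<noteq> y \<longrightarrow> r t x y \<ge> 0" "\<forall>t\<in>S. \<forall>x y. x \<noteq> y \<longrightarrow> rh t x y > 0"
  shows "continuous_on S (\<lambda>t. jump_loss (Q t) (r t) (rh t) x)"
  unfolding jump_loss_def ellfun_def
proof (intro continuous_intros assms)
  fix y assume "y \<in> UNIV - {x}"
  with assms(4,5) show "continuous_on S (\<lambda>t. Kfun (r t x y))" "\<forall>t\<in>S. rh t x y \<noteq> 0"
    by (auto intro!: continuous_on_compose2[OF continuous_on_Kfun assms(2)] simp: less_imp_neq[symmetric])
qed

lemma entropy_production_le:
  fixes Q r rh :: "'x::finite \<Rightarrow> 'x \<Rightarrow> real" and P R :: "'x \<Rightarrow> real"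
  assumes Q_nonneg: "\<forall>x y. x \<noteq> y \<longrightarrow> Q x y \<ge> 0" and r_nonneg: "\<forall>x y. x \<noteq> y \<longrightarrow> r x y \<ge> 0"
    and rh_pos: "\<forall>x y. x \<noteq> y \<longrightarrow> rh x y > 0" and P_pos: "\<And>x. P x > 0" and R_pos: "\<And>x. R x > 0"
  shows "(\<Sum>x\<in>UNIV. (\<Sum>y\<in>UNIV. gen Q r x y * P y) * (ln (P x) - ln (R x) + 1))
         - (\<Sum>x\<in>UNIV. P x / R x * (\<Sum>y\<in>UNIV. gen Q rh x y * R y))
       \<le> (\<Sum>x\<in>UNIV. P x * jump_loss Q r rh x)"
proof -
  define \<rho> where "\<rho> x = P x / R x" for x
  have \<rho>_pos: "\<rho> x > 0" for x
    using P_pos R_pos by (simp add: \<rho>_def)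
  have ln_\<rho>: "ln (\<rho> x) = ln (P x) - ln (R x)" for x
    unfolding \<rho>_def by (rule ln_divide_pos) (use P_pos R_pos in auto)
  have ln_diff: "(ln (P x) - ln (R x) + 1) - (ln (P y) - ln (R y) + 1) = ln (\<rho> x / \<rho> y)" for x y
    by (simp add: ln_divide_pos[OF \<rho>_pos \<rho>_pos] ln_\<rho>)
  have R_diff: "R y * (c * (\<rho> x - \<rho> y)) = P y * (c * (\<rho> x / \<rho> y - 1))" for c x y
    using P_pos[of y] R_pos[of x] R_pos[of y] by (simp add: \<rho>_def field_simps)
  have "(\<Sum>x\<in>UNIV. P x / R x * (\<Sum>y\<in>UNIV. gen Q rh x y * R y))
      = (\<Sum>x\<in>UNIV. (\<Sum>y\<in>UNIV. gen Q rh x y * R y) * \<rho> x)"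
    by (simp add: \<rho>_def mult.commute)
  also have "\<dots> = (\<Sum>y\<in>UNIV. R y * (\<Sum>x\<in>UNIV - {y}. Q y x * rh y x * (\<rho> x - \<rho> y)))"
    by (rule sum_gen_mult)
  also have "\<dots> = (\<Sum>y\<in>UNIV. P y * (\<Sum>x\<in>UNIV - {y}. Q y x * rh y x * (\<rho> x / \<rho> y - 1)))"
    by (simp add: sum_distrib_left R_diff)
  finally have "(\<Sum>x\<in>UNIV. P x / R x * (\<Sum>y\<in>UNIV. gen Q rh x y * R y))
      = (\<Sum>y\<in>UNIV. P y * (\<Sum>x\<in>UNIV - {y}. Q y x * rh y x * (\<rho> x / \<rho> y - 1)))" .
  moreover have "(\<Sum>x\<in>UNIV. (\<Sum>y\<in>UNIV. gen Q r x y * P y) * (ln (P x) - ln (R x) + 1))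
      = (\<Sum>y\<in>UNIV. P y * (\<Sum>x\<in>UNIV - {y}. Q y x * r y x * ln (\<rho> x / \<rho> y)))"
    by (simp only: sum_gen_mult ln_diff)
  ultimately have "(\<Sum>x\<in>UNIV. (\<Sum>y\<in>UNIV. gen Q r x y * P y) * (ln (P x) - ln (R x) + 1))
         - (\<Sum>x\<in>UNIV. P x / R x * (\<Sum>y\<in>UNIV. gen Q rh x y * R y))
      = (\<Sum>y\<in>UNIV. P y * (\<Sum>x\<in>UNIV - {y}.
           Q y x * (r y x * ln (\<rho> x / \<rho> y) - rh y x * (\<rho> x / \<rho> y - 1))))"
    by (simp add: sum_subtractf right_diff_distrib mult.assoc)
  also have "\<dots> \<le> (\<Sum>y\<in>UNIV. P y * jump_loss Q r rh y)"
    unfolding jump_loss_def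
    using Q_nonneg r_nonneg rh_pos P_pos \<rho>_pos
    by (intro sum_mono mult_left_mono ln_mult_sub_le_ellfun) (auto intro: less_imp_le)
  finally show ?thesis .
qed

lemma shifted_entropy_rate_ge:
  fixes Q r rh :: "'x::finite \<Rightarrow> 'x \<Rightarrow> real" and p q :: "'x \<Rightarrow> real"
  assumes Q_nonneg: "\<forall>x y. x \<noteq> y \<longrightarrow> Q x y \<ge> 0" and r_nonneg: "\<forall>x y. x \<noteq> y \<longrightarrow> r x y \<ge> 0"
    and rh_pos: "\<forall>x y. x \<noteq> y \<longrightarrow> rh x y > 0"
    and p_nonneg: "\<forall>x. p x \<ge> 0" and q_nonneg: "\<forall>x. q x \<ge> 0" and "\<epsilon> > 0" "\<delta> > 0"
    and row_le: "\<forall>x. (\<Sum>y\<in>UNIV. gen Q rh x y) \<le> K"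
  defines "P \<equiv> \<lambda>x. p x + \<epsilon>" and "R \<equiv> \<lambda>x. q x + \<delta>"
    and "P' \<equiv> \<lambda>x. - (\<Sum>y\<in>UNIV. gen Q r x y * p y)"
    and "R' \<equiv> \<lambda>x. - (\<Sum>y\<in>UNIV. gen Q rh x y * q y) - \<delta> * K"
  shows "(\<Sum>x\<in>UNIV. P' x * (ln (P x) - ln (R x)) + P' x - P x * R' x / R x)
       \<ge> \<epsilon> * (\<Sum>x\<in>UNIV. (\<Sum>y\<in>UNIV. gen Q r x y) * (ln (P x) - ln (R x) + 1))
         - (\<Sum>x\<in>UNIV. P x * jump_loss Q r rh x)"
proof -
  define L where "L x = ln (P x) - ln (R x) + 1" for x
  define a where "a x = (\<Sum>y\<in>UNIV. gen Q r x y)" for x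
  define AP where "AP x = (\<Sum>y\<in>UNIV. gen Q r x y * P y)" for x
  define BR where "BR x = (\<Sum>y\<in>UNIV. gen Q rh x y * R y)" for x
  define V where "V x = \<delta> * P x * (K - (\<Sum>y\<in>UNIV. gen Q rh x y)) / R x" for x
  have P_pos: "P x > 0" and R_pos: "R x > 0" for x
    using p_nonneg q_nonneg \<open>\<epsilon> > 0\<close> \<open>\<delta> > 0\<close> by (auto simp: P_def R_def add_nonneg_pos)
  have P': "P' x = - AP x + \<epsilon> * a x" for x
    by (simp add: P'_def AP_def a_def P_def algebra_simps sum.distrib sum_distrib_left)
  have R': "R' x = - BR x + \<delta> * ((\<Sum>y\<in>UNIV. gen Q rh x y) - K)" for x
    by (simp add: R'_def BR_def R_def algebra_simps sum.distrib sum_distrib_left)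
  have "P' x * (ln (P x) - ln (R x)) + P' x - P x * R' x / R x
      = \<epsilon> * (a x * L x) - (AP x * L x - P x / R x * BR x) + V x" for x
    using R_pos[of x] by (simp add: P' R' L_def V_def field_simps)
  then have "(\<Sum>x\<in>UNIV. P' x * (ln (P x) - ln (R x)) + P' x - P x * R' x / R x)
      = \<epsilon> * (\<Sum>x\<in>UNIV. a x * L x) - ((\<Sum>x\<in>UNIV. AP x * L x) - (\<Sum>x\<in>UNIV. P x / R x * BR x))
        + (\<Sum>x\<in>UNIV. V x)"
    by (simp only: sum.distrib sum_subtractf sum_distrib_left)
  moreover have "(\<Sum>x\<in>UNIV. AP x * L x) - (\<Sum>x\<in>UNIV. P x / R x * BR x)
      \<le> (\<Sum>x\<in>UNIV. P x * jump_loss Q r rh x)"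
    unfolding AP_def BR_def L_def by (rule entropy_production_le[OF Q_nonneg r_nonneg rh_pos P_pos R_pos])
  moreover have "(\<Sum>x\<in>UNIV. V x) \<ge> 0"
  proof (intro sum_nonneg)
    fix x
    have "K - (\<Sum>y\<in>UNIV. gen Q rh x y) \<ge> 0"
      using row_le by simp
    with P_pos[of x] R_pos[of x] \<open>\<delta> > 0\<close> show "V x \<ge> 0"
      by (simp add: V_def)
  qed
  ultimately show ?thesis
    unfolding a_def L_def by linarith
qed

section \<open>The shifted relative entropy along the backward chains\<close>

lemma abs_ln_diff_le:
  fixes u v \<epsilon> M :: real
  assumes "0 < \<epsilon>" "\<epsilon> \<le> u" "u \<le> M" "\<epsilon> \<le> v" "v \<le> M"
  shows "\<bar>ln u - ln v\<bar> \<le> ln M - ln \<epsilon>"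
proof -
  have "ln \<epsilon> \<le> ln u" "ln u \<le> ln M" "ln \<epsilon> \<le> ln v" "ln v \<le> ln M"
    using assms by auto
  then show ?thesis
    by linarith
qed

lemma sum_mult_ln_diff_ge:
  fixes a P R :: "'x::finite \<Rightarrow> real"
  assumes "0 < \<epsilon>" and P: "\<And>x. \<epsilon> \<le> P x \<and> P x \<le> M" and R: "\<And>x. \<epsilon> \<le> R x \<and> R x \<le> M"
    and a: "\<And>x. \<bar>a x\<bar> \<le> A"
  shows "(\<Sum>x\<in>UNIV. a x * (ln (P x) - ln (R x) + 1)) \<ge> - (CARD('x) * (A * (ln M - ln \<epsilon> + 1)))"
proof -
  have term_bound: "\<bar>a x * (ln (P x) - ln (R x) + 1)\<bar> \<le> A * (ln M - ln \<epsilon> + 1)" for x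
  proof -
    have "\<bar>ln (P x) - ln (R x) + 1\<bar> \<le> ln M - ln \<epsilon> + 1"
      using abs_ln_diff_le[of \<epsilon> "P x" M "R x"] assms(1) P[of x] R[of x] by linarith
    then show ?thesis
      unfolding abs_mult by (rule mult_mono[OF a]) (use a[of x] in auto)
  qed
  have "(\<Sum>x::'x\<in>UNIV. - (A * (ln M - ln \<epsilon> + 1))) \<le> (\<Sum>x\<in>UNIV. a x * (ln (P x) - ln (R x) + 1))"
    by (intro sum_mono) (use abs_le_D2[OF term_bound] in \<open>simp add: minus_le_iff\<close>)
  then show ?thesis
    by simp
qed

lemma shifted_entropy_rate_lower_bound:
  fixes Q r rh :: "'x::finite \<Rightarrow> 'x \<Rightarrow> real" and p q :: "'x \<Rightarrow> real"
  assumes Q_nonneg: "\<forall>x y. x \<noteq> y \<longrightarrow> Q x y \<ge> 0" and r_nonneg: "\<forall>x y. x \<noteq> y \<longrightarrow> r x y \<ge> 0"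
    and rh_pos: "\<forall>x y. x \<noteq> y \<longrightarrow> rh x y > 0"
    and p: "\<forall>x. 0 \<le> p x \<and> p x \<le> 1" and q: "\<forall>x. 0 \<le> q x \<and> q x \<le> 1"
    and "0 < \<epsilon>" "\<epsilon> \<le> 1" "\<epsilon> \<le> \<delta>" "\<delta> \<le> exp K"
    and row_le: "\<forall>x. (\<Sum>y\<in>UNIV. gen Q rh x y) \<le> K"
    and A: "\<forall>x. \<bar>\<Sum>y\<in>UNIV. gen Q r x y\<bar> \<le> A" and C: "\<forall>x. \<bar>jump_loss Q r rh x\<bar> \<le> C"
  defines "P \<equiv> \<lambda>x. p x + \<epsilon>" and "R \<equiv> \<lambda>x. q x + \<delta>"
    and "P' \<equiv> \<lambda>x. - (\<Sum>y\<in>UNIV. gen Q r x y * p y)"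
    and "R' \<equiv> \<lambda>x. - (\<Sum>y\<in>UNIV. gen Q rh x y * q y) - \<delta> * K"
  shows "(\<Sum>x\<in>UNIV. P' x * (ln (P x) - ln (R x)) + P' x - P x * R' x / R x)
       \<ge> - (\<Sum>x\<in>UNIV. p x * jump_loss Q r rh x) - \<epsilon> * CARD('x) * (C + A * (ln (1 + exp K) - ln \<epsilon> + 1))"
proof -
  define M where "M = 1 + exp K"
  define X where "X = (\<Sum>x\<in>UNIV. (\<Sum>y\<in>UNIV. gen Q r x y) * (ln (P x) - ln (R x) + 1))"
  have "(\<Sum>x\<in>UNIV. P' x * (ln (P x) - ln (R x)) + P' x - P x * R' x / R x)
      \<ge> \<epsilon> * X - (\<Sum>x\<in>UNIV. P x * jump_loss Q r rh x)"
    unfolding X_def P_def R_def P'_def R'_def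
    using Q_nonneg r_nonneg rh_pos p q row_le \<open>0 < \<epsilon>\<close> \<open>\<epsilon> \<le> \<delta>\<close>
    by (intro shifted_entropy_rate_ge) auto
  moreover have "\<epsilon> \<le> P x \<and> P x \<le> M" "\<epsilon> \<le> R x \<and> R x \<le> M" for x
    using p[rule_format, of x] q[rule_format, of x] \<open>\<epsilon> \<le> 1\<close> \<open>\<epsilon> \<le> \<delta>\<close> \<open>\<delta> \<le> exp K\<close>
    by (auto simp: P_def R_def M_def)
  then have "X \<ge> - (CARD('x) * (A * (ln M - ln \<epsilon> + 1)))"
    unfolding X_def using A \<open>0 < \<epsilon>\<close> by (intro sum_mult_ln_diff_ge) auto
  then have "\<epsilon> * X \<ge> \<epsilon> * - (CARD('x) * (A * (ln M - ln \<epsilon> + 1)))"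
    using \<open>0 < \<epsilon>\<close> by (intro mult_left_mono) auto
  moreover have "(\<Sum>x\<in>UNIV. P x * jump_loss Q r rh x) \<le> (\<Sum>x\<in>UNIV. p x * jump_loss Q r rh x) + \<epsilon> * CARD('x) * C"
  proof -
    have "(\<Sum>x\<in>UNIV. jump_loss Q r rh x) \<le> (\<Sum>x::'x\<in>UNIV. C)"
      using C by (intro sum_mono) (auto simp: abs_le_iff)
    then show ?thesis
      using \<open>0 < \<epsilon>\<close> by (simp add: P_def distrib_right sum.distrib sum_distrib_left[symmetric])
  qed
  ultimately show ?thesis
    unfolding M_def by (simp add: algebra_simps)
qed

definition shifted_KL :: "real \<Rightarrow> real \<Rightarrow> ('x::finite \<Rightarrow> real) \<Rightarrow> ('x \<Rightarrow> real) \<Rightarrow> real"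
  where "shifted_KL a b p q = (\<Sum>x\<in>UNIV. (p x + a) * (ln (p x + a) - ln (q x + b)))"

lemma has_real_derivative_shifted_KL:
  fixes p q :: "real \<Rightarrow> 'x::finite \<Rightarrow> real"
  assumes p: "\<And>x. ((\<lambda>s. p s x + a) has_real_derivative p' x) (at t within S)"
    and q: "\<And>x. ((\<lambda>s. q s x + b s) has_real_derivative q' x) (at t within S)"
    and pos: "\<And>x. p t x + a > 0" "\<And>x. q t x + b t > 0"
  shows "((\<lambda>s. shifted_KL a (b s) (p s) (q s)) has_real_derivative
           (\<Sum>x\<in>UNIV. p' x * (ln (p t x + a) - ln (q t x + b t)) + p' x
              - (p t x + a) * q' x / (q t x + b t))) (at t within S)"
  unfolding shifted_KL_def
proof (rule DERIV_sum)
  fix x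
  have "((\<lambda>s. ln (p s x + a) - ln (q s x + b s)) has_real_derivative
      1 / (p t x + a) * p' x - 1 / (q t x + b t) * q' x) (at t within S)"
    by (rule DERIV_diff[OF DERIV_chain2[OF DERIV_ln_divide[OF pos(1)] p]
          DERIV_chain2[OF DERIV_ln_divide[OF pos(2)] q]])
  from DERIV_mult[OF p[of x] this]
  show "((\<lambda>s. (p s x + a) * (ln (p s x + a) - ln (q s x + b s))) has_real_derivative
      p' x * (ln (p t x + a) - ln (q t x + b t)) + p' x - (p t x + a) * q' x / (q t x + b t))
      (at t within S)"
    by (rule DERIV_cong) (use pos(1)[of x] in \<open>simp add: field_simps\<close>)
qed

lemma shifted_KL_backward_rate_ge:
  fixes Q r rh :: "real \<Rightarrow> 'x::finite \<Rightarrow> 'x \<Rightarrow> real" and qs qh :: "real \<Rightarrow> 'x \<Rightarrow> real"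
  assumes Q_nonneg: "\<forall>x y. x \<noteq> y \<longrightarrow> Q t x y \<ge> 0" and r_nonneg: "\<forall>x y. x \<noteq> y \<longrightarrow> r t x y \<ge> 0"
    and rh_pos: "\<forall>x y. x \<noteq> y \<longrightarrow> rh t x y > 0"
    and qs_marg: "backward_marginals (\<lambda>t. gen (Q t) (r t)) qs"
    and qh_marg: "backward_marginals (\<lambda>t. gen (Q t) (rh t)) qh"
    and qs: "\<forall>x. 0 \<le> qs t x \<and> qs t x \<le> 1" and qh: "\<forall>x. 0 \<le> qh t x \<and> qh t x \<le> 1"
    and "K \<ge> 0" and K: "\<forall>x. (\<Sum>y\<in>UNIV. gen (Q t) (rh t) x y) \<le> K"
    and A: "\<forall>x. \<bar>\<Sum>y\<in>UNIV. gen (Q t) (r t) x y\<bar> \<le> A"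
    and C: "\<forall>x. \<bar>jump_loss (Q t) (r t) (rh t) x\<bar> \<le> C"
    and "t \<in> {0..1}" "0 < \<epsilon>" "\<epsilon> \<le> 1"
  shows "\<exists>D. ((\<lambda>s. shifted_KL \<epsilon> (exp (K * (1 - s)) * \<epsilon>) (qs s) (qh s)) has_real_derivative D)
              (at t within {0..1})
           \<and> D \<ge> - (\<Sum>x\<in>UNIV. qs t x * jump_loss (Q t) (r t) (rh t) x)
                  - \<epsilon> * CARD('x) * (C + A * (ln (1 + exp K) - ln \<epsilon> + 1))"
proof -
  define \<delta> where "\<delta> s = exp (K * (1 - s)) * \<epsilon>" for s
  define D where "D = (\<Sum>x\<in>UNIV.
      - (\<Sum>y\<in>UNIV. gen (Q t) (r t) x y * qs t y) * (ln (qs t x + \<epsilon>) - ln (qh t x + \<delta> t))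
      + - (\<Sum>y\<in>UNIV. gen (Q t) (r t) x y * qs t y)
      - (qs t x + \<epsilon>) * (- (\<Sum>y\<in>UNIV. gen (Q t) (rh t) x y * qh t y) - \<delta> t * K) / (qh t x + \<delta> t))"
  have "1 \<le> exp (K * (1 - t))" "exp (K * (1 - t)) \<le> exp K"
    using \<open>t \<in> {0..1}\<close> \<open>K \<ge> 0\<close> by (auto simp: mult_left_le)
  then have "1 * \<epsilon> \<le> \<delta> t" "\<delta> t \<le> exp K * 1"
    unfolding \<delta>_def using \<open>0 < \<epsilon>\<close> \<open>\<epsilon> \<le> 1\<close> by (intro mult_mono; simp)+
  then have \<delta>_bounds: "\<epsilon> \<le> \<delta> t" "\<delta> t \<le> exp K"
    by simp_all
  have "((\<lambda>s. qs s x + \<epsilon>) has_real_derivative - (\<Sum>y\<in>UNIV. gen (Q t) (r t) x y * qs t y))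
      (at t within {0..1})" for x
    using qs_marg \<open>t \<in> {0..1}\<close> unfolding backward_marginals_def by (auto intro!: derivative_eq_intros)
  moreover have "((\<lambda>s. qh s x + \<delta> s) has_real_derivative
      - (\<Sum>y\<in>UNIV. gen (Q t) (rh t) x y * qh t y) - \<delta> t * K) (at t within {0..1})" for x
    using qh_marg \<open>t \<in> {0..1}\<close> unfolding backward_marginals_def \<delta>_def
    by (auto intro!: derivative_eq_intros)
  moreover have "qs t x + \<epsilon> > 0" "qh t x + \<delta> t > 0" for x
    using qs qh \<delta>_bounds \<open>0 < \<epsilon>\<close> by (auto intro: add_nonneg_pos less_le_trans)
  ultimately have "((\<lambda>s. shifted_KL \<epsilon> (\<delta> s) (qs s) (qh s)) has_real_derivative D) (at t within {0..1})"
    unfolding D_def by (rule has_real_derivative_shifted_KL)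
  moreover have "D \<ge> - (\<Sum>x\<in>UNIV. qs t x * jump_loss (Q t) (r t) (rh t) x)
      - \<epsilon> * CARD('x) * (C + A * (ln (1 + exp K) - ln \<epsilon> + 1))"
    unfolding D_def using Q_nonneg r_nonneg rh_pos qs qh \<delta>_bounds K A C \<open>0 < \<epsilon>\<close> \<open>\<epsilon> \<le> 1\<close>
    by (intro shifted_entropy_rate_lower_bound) auto
  ultimately show ?thesis
    unfolding \<delta>_def by blast
qed

lemma shifted_KL_le_integral:
  fixes Q r rh :: "real \<Rightarrow> 'x::finite \<Rightarrow> 'x \<Rightarrow> real" and qs qh :: "real \<Rightarrow> 'x \<Rightarrow> real"
  assumes "\<forall>t\<in>{0..1}. \<forall>x y. x \<noteq> y \<longrightarrow> Q t x y \<ge> 0"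
    and "\<forall>t\<in>{0..1}. \<forall>x y. x \<noteq> y \<longrightarrow> r t x y \<ge> 0"
    and "\<forall>t\<in>{0..1}. \<forall>x y. x \<noteq> y \<longrightarrow> rh t x y > 0"
    and qs_marg: "backward_marginals (\<lambda>t. gen (Q t) (r t)) qs"
    and "backward_marginals (\<lambda>t. gen (Q t) (rh t)) qh"
    and qs_prob: "\<forall>t\<in>{0..1}. prob_vec (qs t)" and qh_prob: "\<forall>t\<in>{0..1}. prob_vec (qh t)"
    and "K \<ge> 0" and "\<forall>t\<in>{0..1}. \<forall>x. (\<Sum>y\<in>UNIV. gen (Q t) (rh t) x y) \<le> K"
    and "\<forall>t\<in>{0..1}. \<forall>x. \<bar>\<Sum>y\<in>UNIV. gen (Q t) (r t) x y\<bar> \<le> A"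
    and "\<forall>t\<in>{0..1}. \<forall>x. \<bar>jump_loss (Q t) (r t) (rh t) x\<bar> \<le> C"
    and loss_cont: "\<forall>x. continuous_on {0..1} (\<lambda>t. jump_loss (Q t) (r t) (rh t) x)"
    and "0 < \<epsilon>" "\<epsilon> \<le> 1"
  shows "shifted_KL \<epsilon> (exp K * \<epsilon>) (qs 0) (qh 0)
       \<le> shifted_KL \<epsilon> \<epsilon> (qs 1) (qh 1)
         + integral {0..1} (\<lambda>t. \<Sum>x\<in>UNIV. qs t x * jump_loss (Q t) (r t) (rh t) x)
         + \<epsilon> * CARD('x) * (C + A * (ln (1 + exp K) - ln \<epsilon> + 1))"
proof -
  have "continuous_on {0..1} (\<lambda>s. qs s x)" for x
    using qs_marg unfolding backward_marginals_def by (intro DERIV_continuous_on) blast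
  then have "continuous_on {0..1} (\<lambda>t. \<Sum>x\<in>UNIV. qs t x * jump_loss (Q t) (r t) (rh t) x)"
    using loss_cont by (auto intro!: continuous_intros)
  moreover have "\<forall>x. 0 \<le> qs t x \<and> qs t x \<le> 1" "\<forall>x. 0 \<le> qh t x \<and> qh t x \<le> 1" if "t \<in> {0..1}" for t
    using qs_prob qh_prob that by (auto simp: prob_vec_le_1) (auto simp: prob_vec_def)
  ultimately have "shifted_KL \<epsilon> (exp (K * (1 - 0)) * \<epsilon>) (qs 0) (qh 0)
      \<le> shifted_KL \<epsilon> (exp (K * (1 - 1)) * \<epsilon>) (qs 1) (qh 1)
        + integral {0..1} (\<lambda>t. \<Sum>x\<in>UNIV. qs t x * jump_loss (Q t) (r t) (rh t) x)
        + \<epsilon> * CARD('x) * (C + A * (ln (1 + exp K) - ln \<epsilon> + 1)) * (1 - 0)"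
    using assms by (intro le_integral_of_has_real_derivative_ge shifted_KL_backward_rate_ge) auto
  then show ?thesis
    by simp
qed

lemma shifted_KL_le_integral_asymptotic:
  fixes Q r rh :: "real \<Rightarrow> 'x::finite \<Rightarrow> 'x \<Rightarrow> real" and qs qh :: "real \<Rightarrow> 'x \<Rightarrow> real"
  assumes "\<forall>t\<in>{0..1}. \<forall>x y. x \<noteq> y \<longrightarrow> Q t x y \<ge> 0"
    and r_nonneg: "\<forall>t\<in>{0..1}. \<forall>x y. x \<noteq> y \<longrightarrow> r t x y \<ge> 0"
    and rh_pos: "\<forall>t\<in>{0..1}. \<forall>x y. x \<noteq> y \<longrightarrow> rh t x y > 0"
    and Q_cont: "\<forall>x y. continuous_on {0..1} (\<lambda>t. Q t x y)"
    and r_cont: "\<forall>x y. continuous_on {0..1} (\<lambda>t. r t x y)"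
    and rh_cont: "\<forall>x y. continuous_on {0..1} (\<lambda>t. rh t x y)"
    and "backward_marginals (\<lambda>t. gen (Q t) (r t)) qs"
    and "backward_marginals (\<lambda>t. gen (Q t) (rh t)) qh"
    and "\<forall>t\<in>{0..1}. prob_vec (qs t)" and "\<forall>t\<in>{0..1}. prob_vec (qh t)"
  shows "\<exists>K err. (err \<longlongrightarrow> 0) (at_right 0) \<and>
    (\<forall>\<epsilon>. 0 < \<epsilon> \<and> \<epsilon> \<le> 1 \<longrightarrow> shifted_KL \<epsilon> (exp K * \<epsilon>) (qs 0) (qh 0)
       \<le> shifted_KL \<epsilon> \<epsilon> (qs 1) (qh 1)
         + integral {0..1} (\<lambda>t. \<Sum>x\<in>UNIV. qs t x * jump_loss (Q t) (r t) (rh t) x) + err \<epsilon>)"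
proof -
  have row_sum_cont: "continuous_on {0..1} (\<lambda>t. \<Sum>y\<in>UNIV. gen (Q t) (r t) x y)"
    "continuous_on {0..1} (\<lambda>t. \<Sum>y\<in>UNIV. gen (Q t) (rh t) x y)" for x
    using Q_cont r_cont rh_cont by (simp_all add: continuous_on_sum continuous_on_gen)
  have loss_cont: "\<forall>x. continuous_on {0..1} (\<lambda>t. jump_loss (Q t) (r t) (rh t) x)"
    using Q_cont r_cont rh_cont r_nonneg rh_pos by (simp add: continuous_on_jump_loss)
  obtain A where A: "\<forall>t\<in>{0..1}. \<forall>x. \<bar>\<Sum>y\<in>UNIV. gen (Q t) (r t) x y\<bar> \<le> A"
    using continuous_on_compact_bound_finite[of "{0..1}" "\<lambda>t x. \<Sum>y\<in>UNIV. gen (Q t) (r t) x y",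
        OF compact_Icc row_sum_cont(1)] by blast
  obtain K where "K \<ge> 0" and K: "\<forall>t\<in>{0..1}. \<forall>x. \<bar>\<Sum>y\<in>UNIV. gen (Q t) (rh t) x y\<bar> \<le> K"
    using continuous_on_compact_bound_finite[of "{0..1}" "\<lambda>t x. \<Sum>y\<in>UNIV. gen (Q t) (rh t) x y",
        OF compact_Icc row_sum_cont(2)] by blast
  obtain C where C: "\<forall>t\<in>{0..1}. \<forall>x. \<bar>jump_loss (Q t) (r t) (rh t) x\<bar> \<le> C"
    using continuous_on_compact_bound_finite[of "{0..1}" "\<lambda>t. jump_loss (Q t) (r t) (rh t)",
        OF compact_Icc loss_cont[rule_format]] by blast
  have "((\<lambda>\<epsilon>::real. \<epsilon> * CARD('x) * (C + A * (ln (1 + exp K) - ln \<epsilon> + 1))) \<longlongrightarrow> 0) (at_right 0)"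
    by real_asymp
  moreover have "shifted_KL \<epsilon> (exp K * \<epsilon>) (qs 0) (qh 0) \<le> shifted_KL \<epsilon> \<epsilon> (qs 1) (qh 1)
      + integral {0..1} (\<lambda>t. \<Sum>x\<in>UNIV. qs t x * jump_loss (Q t) (r t) (rh t) x)
      + \<epsilon> * CARD('x) * (C + A * (ln (1 + exp K) - ln \<epsilon> + 1))"
    if "0 < \<epsilon>" "\<epsilon> \<le> 1" for \<epsilon>
    using assms \<open>K \<ge> 0\<close> K A C loss_cont that
    by (intro shifted_KL_le_integral) (auto simp: abs_le_iff)
  ultimately show ?thesis
    by blast
qed

section \<open>Removing the shift\<close>

lemma tendsto_sum_ereal_not_MInfty:
  fixes f :: "'i \<Rightarrow> 'a \<Rightarrow> ereal"
  assumes "finite S" "\<And>i. i \<in> S \<Longrightarrow> (f i \<longlongrightarrow> l i) F" "\<And>i. i \<in> S \<Longrightarrow> l i \<noteq> -\<infinity>"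
  shows "((\<lambda>z. \<Sum>i\<in>S. f i z) \<longlongrightarrow> (\<Sum>i\<in>S. l i)) F"
proof -
  have "((\<lambda>z. \<Sum>i\<in>S. f i z) \<longlongrightarrow> (\<Sum>i\<in>S. l i)) F \<and> (\<Sum>i\<in>S. l i) \<noteq> -\<infinity>"
    using assms
  proof (induction S rule: finite_induct)
    case (insert i S)
    then show ?case
      by (auto intro!: tendsto_add_ereal_general)
  qed simp
  then show ?thesis ..
qed

definition KL_term :: "real \<Rightarrow> real \<Rightarrow> ereal"
  where "KL_term a b = (if a = 0 then 0 else if b > 0 then ereal (a * ln (a / b)) else \<infinity>)"

lemma KL_eq_sum_KL_term:
  assumes "\<forall>x. p x \<ge> 0"
  shows "KL p q = (\<Sum>x\<in>UNIV. KL_term (p x) (q x))"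
proof (cases "\<forall>x. p x > 0 \<longrightarrow> q x > 0")
  case True
  then have "KL_term (p x) (q x) = ereal (if p x = 0 then 0 else p x * ln (p x / q x))" for x
    using assms by (auto simp: KL_term_def order_le_less)
  with True show ?thesis
    by (simp add: KL_def)
next
  case False
  then obtain x where "p x > 0" "\<not> q x > 0"
    by blast
  then have "KL_term (p x) (q x) = \<infinity>"
    by (simp add: KL_term_def)
  then have "(\<Sum>x\<in>UNIV. KL_term (p x) (q x)) = \<infinity>"
    by (auto simp: sum_Pinfty)
  with False show ?thesis
    by (simp add: KL_def)
qed

lemma shifted_term_tendsto_KL_term:
  fixes a b c :: real
  assumes "a \<ge> 0" "b \<ge> 0" "c > 0"
  shows "((\<lambda>\<epsilon>. ereal ((a + \<epsilon>) * (ln (a + \<epsilon>) - ln (b + c * \<epsilon>)))) \<longlongrightarrow> KL_term a b) (at_right 0)"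
proof -
  consider "a = 0" "b = 0" | "a = 0" "b > 0" | "a > 0" "b > 0" | "a > 0" "b = 0"
    using assms by linarith
  then show ?thesis
  proof cases
    case 1
    have "((\<lambda>\<epsilon>. (a + \<epsilon>) * (ln (a + \<epsilon>) - ln (b + c * \<epsilon>))) \<longlongrightarrow> 0) (at_right 0)"
      unfolding 1 using \<open>c > 0\<close> by real_asymp
    moreover have "KL_term a b = ereal 0"
      using 1 by (simp add: KL_term_def)
    ultimately show ?thesis
      by (simp only: tendsto_ereal)
  next
    case 2
    have "((\<lambda>\<epsilon>. (a + \<epsilon>) * (ln (a + \<epsilon>) - ln (b + c * \<epsilon>))) \<longlongrightarrow> 0) (at_right 0)"
      unfolding 2 using \<open>b > 0\<close> by real_asymp
    moreover have "KL_term a b = ereal 0"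
      using 2 by (simp add: KL_term_def)
    ultimately show ?thesis
      by (simp only: tendsto_ereal)
  next
    case 3
    have "((\<lambda>\<epsilon>. (a + \<epsilon>) * (ln (a + \<epsilon>) - ln (b + c * \<epsilon>))) \<longlongrightarrow> a * (ln a - ln b)) (at_right 0)"
      using 3 by real_asymp
    with 3 show ?thesis
      by (simp add: KL_term_def ln_divide_pos)
  next
    case 4
    have "filterlim (\<lambda>\<epsilon>. (a + \<epsilon>) * (ln (a + \<epsilon>) - ln (b + c * \<epsilon>))) at_top (at_right 0)"
      unfolding 4 using \<open>a > 0\<close> \<open>c > 0\<close> by real_asymp
    with 4 show ?thesis
      by (simp add: KL_term_def tendsto_PInfty_eq_at_top)
  qed
qed

lemma shifted_KL_tendsto_KL:
  assumes "\<forall>x. p x \<ge> 0" "\<forall>x. q x \<ge> 0" "c > 0"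
  shows "((\<lambda>\<epsilon>. ereal (shifted_KL \<epsilon> (c * \<epsilon>) p q)) \<longlongrightarrow> KL p q) (at_right 0)"
proof -
  have "((\<lambda>\<epsilon>. \<Sum>x\<in>UNIV. ereal ((p x + \<epsilon>) * (ln (p x + \<epsilon>) - ln (q x + c * \<epsilon>))))
      \<longlongrightarrow> (\<Sum>x\<in>UNIV. KL_term (p x) (q x))) (at_right 0)"
    using assms
    by (intro tendsto_sum_ereal_not_MInfty shifted_term_tendsto_KL_term) (auto simp: KL_term_def)
  then show ?thesis
    using assms by (simp add: shifted_KL_def KL_eq_sum_KL_term)
qed

lemma KL_le_of_shifted_KL_le:
  fixes p0 q0 p1 q1 :: "'x::finite \<Rightarrow> real"
  assumes "\<forall>x. p0 x \<ge> 0" "\<forall>x. q0 x \<ge> 0" "\<forall>x. p1 x \<ge> 0" "\<forall>x. q1 x \<ge> 0" "c > 0"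
    and err: "(err \<longlongrightarrow> 0) (at_right 0)"
    and le: "\<And>\<epsilon>. 0 < \<epsilon> \<Longrightarrow> \<epsilon> \<le> 1 \<Longrightarrow>
      shifted_KL \<epsilon> (c * \<epsilon>) p0 q0 \<le> shifted_KL \<epsilon> \<epsilon> p1 q1 + I + err \<epsilon>"
  shows "KL p0 q0 \<le> ereal I + KL p1 q1"
proof -
  have "((\<lambda>\<epsilon>. ereal (shifted_KL \<epsilon> \<epsilon> p1 q1)) \<longlongrightarrow> KL p1 q1) (at_right 0)"
    using shifted_KL_tendsto_KL[of p1 q1 1] assms by simp
  moreover have "((\<lambda>\<epsilon>. ereal (I + err \<epsilon>)) \<longlongrightarrow> ereal I) (at_right 0)"
    using tendsto_add[OF tendsto_const err, of I] by (intro tendsto_ereal) simp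
  moreover have "KL p1 q1 \<noteq> -\<infinity>"
    by (simp add: KL_def)
  ultimately have "((\<lambda>\<epsilon>. ereal (shifted_KL \<epsilon> \<epsilon> p1 q1) + ereal (I + err \<epsilon>)) \<longlongrightarrow> KL p1 q1 + ereal I)
      (at_right 0)"
    by (intro tendsto_add_ereal_general) auto
  moreover have "\<forall>\<^sub>F \<epsilon> in at_right 0. ereal (shifted_KL \<epsilon> (c * \<epsilon>) p0 q0)
      \<le> ereal (shifted_KL \<epsilon> \<epsilon> p1 q1) + ereal (I + err \<epsilon>)"
    unfolding eventually_at_right_field
    by (intro exI[of _ 1]) (use le in \<open>auto simp: algebra_simps\<close>)
  ultimately have "KL p0 q0 \<le> KL p1 q1 + ereal I"
    using shifted_KL_tendsto_KL[of p0 q0 c] assms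
    by (intro tendsto_le[OF trivial_limit_at_right_real]) auto
  then show ?thesis
    by (simp add: add.commute)
qed

theorem lemma1:
  fixes Q r rh :: "real \<Rightarrow> 'x::finite \<Rightarrow> 'x \<Rightarrow> real"
    and qs qh :: "real \<Rightarrow> 'x \<Rightarrow> real"
  assumes Q_rate: "\<forall>t\<in>{0..1}. rate_matrix (Q t)"
    and r_nonneg: "\<forall>t\<in>{0..1}. \<forall>x y. x \<noteq> y \<longrightarrow> r t x y \<ge> 0"
    and rh_pos: "\<forall>t\<in>{0..1}. \<forall>x y. x \<noteq> y \<longrightarrow> rh t x y > 0"
    and Q_cont: "\<forall>x y. continuous_on {0..1} (\<lambda>t. Q t x y)"
    and r_cont: "\<forall>x y. continuous_on {0..1} (\<lambda>t. r t x y)"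
    and rh_cont: "\<forall>x y. continuous_on {0..1} (\<lambda>t. rh t x y)"
    and Qs_rate: "\<forall>t\<in>{0..1}. rate_matrix (gen (Q t) (r t))"
    and Qh_rate: "\<forall>t\<in>{0..1}. rate_matrix (gen (Q t) (rh t))"
    and qs1: "prob_vec (qs 1)"
    and qh1: "prob_vec (qh 1)"
    and qs_marg: "backward_marginals (\<lambda>t. gen (Q t) (r t)) qs"
    and qh_marg: "backward_marginals (\<lambda>t. gen (Q t) (rh t)) qh"
  shows "KL (qs 0) (qh 0)
         \<le> ereal (integral {0..1} (\<lambda>t. \<Sum>x\<in>UNIV. qs t x *
                (\<Sum>y\<in>UNIV - {x}. Q t x y * ellfun (r t x y) (rh t x y))))
           + KL (qs 1) (qh 1)"
proof -
  have Q_nonneg: "\<forall>t\<in>{0..1}. \<forall>x y. x \<noteq> y \<longrightarrow> Q t x y \<ge> 0"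
    using Q_rate by (simp add: rate_matrix_def)
  have gen_cont: "\<forall>x y. continuous_on {0..1} (\<lambda>t. gen (Q t) (r t) x y)"
    "\<forall>x y. continuous_on {0..1} (\<lambda>t. gen (Q t) (rh t) x y)"
    using Q_cont r_cont rh_cont by (simp_all add: continuous_on_gen)
  have qs_prob: "\<forall>t\<in>{0..1}. prob_vec (qs t)" and qh_prob: "\<forall>t\<in>{0..1}. prob_vec (qh t)"
    using backward_marginals_prob_vec[OF Qs_rate gen_cont(1) qs_marg qs1]
      backward_marginals_prob_vec[OF Qh_rate gen_cont(2) qh_marg qh1] by blast+
  then obtain K err where "(err \<longlongrightarrow> 0) (at_right 0)"
    and "\<forall>\<epsilon>. 0 < \<epsilon> \<and> \<epsilon> \<le> 1 \<longrightarrow>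
      shifted_KL \<epsilon> (exp K * \<epsilon>) (qs 0) (qh 0) \<le> shifted_KL \<epsilon> \<epsilon> (qs 1) (qh 1)
        + integral {0..1} (\<lambda>t. \<Sum>x\<in>UNIV. qs t x * jump_loss (Q t) (r t) (rh t) x) + err \<epsilon>"
    using shifted_KL_le_integral_asymptotic[OF Q_nonneg r_nonneg rh_pos Q_cont r_cont rh_cont
        qs_marg qh_marg] by blast
  then have "KL (qs 0) (qh 0)
      \<le> ereal (integral {0..1} (\<lambda>t. \<Sum>x\<in>UNIV. qs t x * jump_loss (Q t) (r t) (rh t) x)) + KL (qs 1) (qh 1)"
    using qs_prob qh_prob by (intro KL_le_of_shifted_KL_le) (auto simp: prob_vec_def)
  then show ?thesis
    by (simp add: jump_loss_def)
qed

end
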